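(* Let $Y$ be a set and $(A_n)_{n=1}^\infty$ a sequence of pairwise disjoint finite subsets of $Y$. Let $\mathcal{X}\subseteq\bigcup_{\emptyset\ne F\in[\mathbb{N}]^{<\infty}}\prod_{n\in F}A_n$ be hereditary, i.e. $(x_n)_{n\in G}\in\mathcal{X}$ whenever $(x_n)_{n\in F}\in\mathcal{X}$ and $\emptyset\ne G\subseteq F$. Let $\mathcal{H}\subseteq[\mathbb{N}]^{<\infty}$ be a regular family and $\beta$ an ordinal with $\omega_1>\iota(\mathcal{H})\ge\beta\ge1$. Suppose that for every nonempty $F\in\mathcal{H}$ there exists $(x_n)_{n\in F}\in\mathcal{X}$. Then there exists a tree $T$ on $Y$ with $T\subseteq\mathcal{X}$ and $o(T)\ge\beta$.
   Context: An element $(x_n)_{n\in F}\in\prod_{n\in F}A_n$ with $F=\{n_1<\dots<n_k\}$ is identified with the finite sequence $(x_{n_1},\dots,x_{n_k})\in Y^k$. A tree on a set $S$ is a subset $T\subseteq\bigcup_{n\ge1}S^n$ closed under taking initial segments. For a well-founded tree $T$, $D(T)$ is the set of $(x_1,\dots,x_n)\in T$ having an extension $(x_1,\dots,x_n,x)\in T$, $D^0(T)=T$, $D^{\gamma+1}(T)=D(D^\gamma(T))$, $D^\gamma(T)=\bigcap_{\delta<\gamma}D^\delta(T)$ for limit $\gamma$, and $o(T)$ is the least $\gamma$ with $D^\gamma(T)=\emptyset$. A family $\mathcal{H}\subseteq[\mathbb{N}]^{<\infty}$ is regular if hereditary, spreading and compact in $2^{\mathbb{N}}$; $\iota(\mathcal{H})$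 is the ordinal $\gamma$ with $\mathcal{H}^{(\gamma)}=\{\emptyset\}$, where $\mathcal{H}^{(\gamma)}$ are the iterated Cantor–Bendixson derived sets (limit points, intersections at limits). *)

theory Defs
  imports "HOL-Analysis.Analysis"
begin

text \<open>For a well-order r and an element a of its field, trans_iter r X0 d a is the
  gamma-th iterate of d starting at X0, where gamma is the order type of the
  initial segment strictly below a: X0 at the least element, d applied at
  successors, intersections of all earlier iterates at limits.\<close>

definition trans_iter :: "'b rel \<Rightarrow> 'x set \<Rightarrow> ('x set \<Rightarrow> 'x set) \<Rightarrow> 'b \<Rightarrow> 'x set" where
  "trans_iter r X0 d = wfrec (r - Id) (\<lambda>f a.
     if \<forall>b. (b, a) \<notin> r - Id then X0
     else if \<exists>b. (b, a) \<in> r - Id \<and> (\<forall>c. (c, a) \<in> r - Id \<longrightarrow> (c, b) \<in> r)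
       then d (f (THE b. (b, a) \<in> r - Id \<and> (\<forall>c. (c, a) \<in> r - Id \<longrightarrow> (c, b) \<in> r)))
     else \<Inter> {f b | b. (b, a) \<in> r - Id})"

text \<open>The iterate at the order type of the whole well-order r.\<close>

definition trans_iter_full :: "'b rel \<Rightarrow> 'x set \<Rightarrow> ('x set \<Rightarrow> 'x set) \<Rightarrow> 'x set" where
  "trans_iter_full r X0 d =
     (if Field r = {} then X0
      else if \<exists>m\<in>Field r. \<forall>c\<in>Field r. (c, m) \<in> r
        then d (trans_iter r X0 d (THE m. m \<in> Field r \<and> (\<forall>c\<in>Field r. (c, m) \<in> r)))
      else \<Inter> {trans_iter r X0 d a | a. a \<in> Field r})"

definition char_set :: "nat set \<Rightarrow> (nat \<Rightarrow> bool)" where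
  "char_set F = (\<lambda>n. n \<in> F)"

definition hereditary_fam :: "nat set set \<Rightarrow> bool" where
  "hereditary_fam H \<longleftrightarrow> (\<forall>F\<in>H. \<forall>G. G \<subseteq> F \<longrightarrow> G \<in> H)"

definition spreading_fam :: "nat set set \<Rightarrow> bool" where
  "spreading_fam H \<longleftrightarrow> (\<forall>F\<in>H. \<forall>G. finite G \<and> card G = card F \<and>
     (\<forall>i < card F. sorted_list_of_set F ! i \<le> sorted_list_of_set G ! i) \<longrightarrow> G \<in> H)"

text \<open>Compactness in 2^N = (nat \<Rightarrow> bool) with the product topology.\<close>

definition regular_fam :: "nat set set \<Rightarrow> bool" where
  "regular_fam H \<longleftrightarrow> (\<forall>F\<in>H. finite F) \<and> hereditary_fam H \<and> spreading_fam H
     \<and> compact (char_set ` H)"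

definition cb_deriv :: "nat set set \<Rightarrow> nat set set" where
  "cb_deriv H = {F. char_set F islimpt (char_set ` H)}"

text \<open>iota(H) >= beta and iota(H) < omega_1: the index iota(H) exists, it is a countable
  ordinal (order type of a well-order on a set of naturals) and is at least beta.\<close>

definition iota_ge_countable :: "nat set set \<Rightarrow> 'b rel \<Rightarrow> bool" where
  "iota_ge_countable H \<beta> \<longleftrightarrow>
     (\<exists>i :: nat rel. Well_order i \<and> trans_iter_full i H cb_deriv = {{}} \<and> (\<beta>, i) \<in> ordLeq)"

definition tree_on :: "'y set \<Rightarrow> 'y list set \<Rightarrow> bool" where
  "tree_on S T \<longleftrightarrow> (\<forall>s\<in>T. s \<noteq> [] \<and> set s \<subseteq> S) \<and>
     (\<forall>s\<in>T. \<forall>k. 1 \<le> k \<and> k \<le> length s \<longrightarrow> take k s \<in> T)"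

definition wf_tree :: "'y list set \<Rightarrow> bool" where
  "wf_tree T \<longleftrightarrow> \<not> (\<exists>f :: nat \<Rightarrow> 'y. \<forall>n. map f [0..<Suc n] \<in> T)"

definition tree_D :: "'y list set \<Rightarrow> 'y list set" where
  "tree_D T = {s \<in> T. \<exists>x. s @ [x] \<in> T}"

text \<open>o(T) >= beta, i.e. D^gamma(T) is nonempty for every gamma < beta.\<close>

definition tree_order_ge :: "'y list set \<Rightarrow> 'b rel \<Rightarrow> bool" where
  "tree_order_ge T \<beta> \<longleftrightarrow> (\<forall>a\<in>Field \<beta>. trans_iter \<beta> T tree_D a \<noteq> {})"

text \<open>The element (x_n)_{n in F} with F = {n_1 < ... < n_k} as the list (x_{n_1},...,x_{n_k}).\<close>

definition seq_of :: "nat set \<Rightarrow> (nat \<Rightarrow> 'y) \<Rightarrow> 'y list" where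
  "seq_of F x = map x (sorted_list_of_set F)"

end

theory Submission
  imports Defs
begin

text \<open>
  Let \<open>T\<close> consist of the sequences in \<open>X\<close> supported on nonempty members of \<open>H\<close>, and let
  \<open>H\<^sup>(\<gamma>)\<close> be the Cantor--Bendixson derivatives of \<open>H\<close>. Embedding \<open>\<beta>\<close> into the well-order
  indexing them, one shows by induction on \<open>a\<close> that every nonempty \<open>F \<in> H\<^sup>(f a)\<close> carries
  a sequence in \<open>D\<^sup>a(T)\<close>. At a successor, \<open>F\<close> is a limit point of \<open>H\<^sup>(\<gamma>)\<close>, hence an
  initial segment of some \<open>G \<in> H\<^sup>(\<gamma>)\<close> that has a further element \<open>n\<close> above \<open>F\<close>; a sequence
  on \<open>G\<close>, cut at \<open>n\<close>, shows that its restriction to \<open>F\<close> has a child. At a limit, only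
  finitely many sequences live on \<open>F\<close> because the \<open>A n\<close> are finite, so one of them survives
  the decreasing intersection. As \<open>H\<^sup>(\<iota>) = {\<emptyset>}\<close>, every earlier derivative has a nonempty
  member, so \<open>D\<^sup>a(T) \<noteq> \<emptyset>\<close> for all \<open>a < \<beta>\<close>. An infinite branch of \<open>T\<close> would, the \<open>A n\<close>
  being disjoint, give an infinite set all of whose initial segments lie in \<open>H\<close>, which
  compactness of \<open>H\<close> forbids.
\<close>

section \<open>Well-orders and transfinite iteration\<close>

lemma Well_order_wf_Diff_Id: "Well_order r \<Longrightarrow> wf (r - Id)"
  by (simp add: well_order_on_def)

lemma Well_order_refl: "Well_order r \<Longrightarrow> a \<in> Field r \<Longrightarrow> (a, a) \<in> r"
  by (metis wo_rel.REFL wo_rel_def refl_onD)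

lemma Well_order_total:
  "Well_order r \<Longrightarrow> a \<in> Field r \<Longrightarrow> b \<in> Field r \<Longrightarrow> (a, b) \<in> r \<or> (b, a) \<in> r"
  by (metis wo_rel.TOTALS wo_rel_def)

lemma Well_order_trans: "Well_order r \<Longrightarrow> (a, b) \<in> r \<Longrightarrow> (b, c) \<in> r \<Longrightarrow> (a, c) \<in> r"
  by (metis wo_rel.TRANS wo_rel_def transD)

lemma Well_order_antisym: "Well_order r \<Longrightarrow> (a, b) \<in> r \<Longrightarrow> (b, a) \<in> r \<Longrightarrow> a = b"
  by (metis wo_rel.ANTISYM wo_rel_def antisymD)

lemma Well_order_not_le_imp_less:
  assumes wo: "Well_order r" and "(c, a) \<in> r - Id" "(b, a) \<in> r - Id" "(c, b) \<notin> r"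
  shows "(b, c) \<in> r - Id"
proof -
  have "b \<in> Field r" "c \<in> Field r" using assms(2,3) by (auto intro: FieldI1)
  then have "(b, c) \<in> r" "(c, c) \<in> r"
    using Well_order_total[OF wo] Well_order_refl[OF wo] assms(4) by blast+
  then show ?thesis using assms(4) by auto
qed

lemma Well_order_finite_upper_bound:
  assumes wo: "Well_order r" and "finite B" "B \<subseteq> S" "S \<noteq> {}" "S \<subseteq> Field r"
  shows "\<exists>m\<in>S. \<forall>b\<in>B. (b, m) \<in> r"
  using assms(2-)
proof (induction B rule: finite_induct)
  case empty then show ?case by blast
next
  case (insert x B)
  then obtain m where m: "m \<in> S" "\<forall>b\<in>B. (b, m) \<in> r" by blast
  have "x \<in> Field r" "m \<in> Field r" using insert m by auto
  then consider "(x, m) \<in> r" | "(m, x) \<in> r" using Well_order_total[OF wo] by blast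
  then show ?case
  proof cases
    case 2
    have "\<forall>b\<in>insert x B. (b, x) \<in> r"
      using m(2) 2 Well_order_trans[OF wo] Well_order_refl[OF wo \<open>x \<in> Field r\<close>] by blast
    then show ?thesis using insert.prems by blast
  qed (use m in blast)
qed

lemma embed_strict:
  assumes wo: "Well_order r" and emb: "embed r s f" and ba: "(b, a) \<in> r - Id"
  shows "(f b, f a) \<in> s - Id"
proof -
  have "a \<in> Field r" using ba by (auto intro: FieldI2)
  moreover have "b \<in> underS r a" using ba by (auto simp: underS_def)
  ultimately have "f b \<in> underS s (f a)"
    using embed_underS[OF wo emb] by (auto simp: bij_betw_def)
  then show ?thesis by (auto simp: underS_def)
qed

lemma trans_iter_cases:
  assumes wo: "Well_order r"
  obtains (least) "\<forall>b. (b, a) \<notin> r - Id" and "trans_iter r X0 d a = X0"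
  | (succ) p where "(p, a) \<in> r - Id" and "\<forall>c. (c, a) \<in> r - Id \<longrightarrow> (c, p) \<in> r"
      and "trans_iter r X0 d a = d (trans_iter r X0 d p)"
  | (limit) "\<exists>b. (b, a) \<in> r - Id"
      and "\<forall>p. (p, a) \<in> r - Id \<longrightarrow> (\<exists>c. (c, a) \<in> r - Id \<and> (c, p) \<notin> r)"
      and "trans_iter r X0 d a = \<Inter> {trans_iter r X0 d b | b. (b, a) \<in> r - Id}"
proof -
  let ?I = "trans_iter r X0 d"
  let ?P = "\<lambda>b. (b, a) \<in> r - Id \<and> (\<forall>c. (c, a) \<in> r - Id \<longrightarrow> (c, b) \<in> r)"
  have unfold: "?I a =
     (if \<forall>b. (b, a) \<notin> r - Id then X0
      else if \<exists>b. ?P b then d (cut ?I (r - Id) a (THE b. ?P b))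
      else \<Inter> {cut ?I (r - Id) a b | b. (b, a) \<in> r - Id})"
    unfolding trans_iter_def by (rule wfrec[OF Well_order_wf_Diff_Id[OF wo]])
  consider "\<forall>b. (b, a) \<notin> r - Id" | p where "?P p"
    | "\<exists>b. (b, a) \<in> r - Id" "\<not> (\<exists>b. ?P b)" by blast
  then show thesis
  proof cases
    case 1
    then show thesis using least unfold by simp
  next
    case (2 p)
    have "(THE b. ?P b) = p"
      using 2 Well_order_antisym[OF wo] by (intro the_equality) blast+
    then have "?I a = d (?I p)" using unfold 2 by (auto simp: cut_apply)
    then show thesis using succ 2 by blast
  next
    case 3
    have "{cut ?I (r - Id) a b | b. (b, a) \<in> r - Id} = {?I b | b. (b, a) \<in> r - Id}"
      unfolding setcompr_eq_image by (rule image_cong) (simp_all add: cut_apply)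
    then have "?I a = \<Inter> {?I b | b. (b, a) \<in> r - Id}" using unfold 3 by auto
    then show thesis using limit 3 by blast
  qed
qed

lemma trans_iter_invariant:
  assumes wo: "Well_order r" and "Q X0" and "\<And>X. Q X \<Longrightarrow> Q (d X)"
    and "\<And>XX. XX \<noteq> {} \<Longrightarrow> \<forall>X\<in>XX. Q X \<Longrightarrow> Q (\<Inter> XX)"
  shows "Q (trans_iter r X0 d a)"
  using Well_order_wf_Diff_Id[OF wo]
proof (induction a rule: wf_induct_rule)
  case (less a)
  show ?case
  proof (cases rule: trans_iter_cases[OF wo, of a X0 d, case_names least succ limit])
    case limit
    have "Q (\<Inter> {trans_iter r X0 d b | b. (b, a) \<in> r - Id})"
      using limit(1) less.IH by (intro assms(4)) auto
    then show ?thesis using limit(3) by simp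
  qed (use assms less.IH in auto)
qed

lemma trans_iter_strict_subset:
  assumes wo: "Well_order r" and Q0: "Q X0" and Qd: "\<And>X. Q X \<Longrightarrow> Q (d X)"
    and QI: "\<And>XX. XX \<noteq> {} \<Longrightarrow> \<forall>X\<in>XX. Q X \<Longrightarrow> Q (\<Inter> XX)"
    and deflationary: "\<And>X. Q X \<Longrightarrow> d X \<subseteq> X"
    and "(b, a) \<in> r - Id"
  shows "trans_iter r X0 d a \<subseteq> d (trans_iter r X0 d b)"
  using Well_order_wf_Diff_Id[OF wo] \<open>(b, a) \<in> r - Id\<close>
proof (induction a arbitrary: b rule: wf_induct_rule)
  case (less a)
  let ?I = "trans_iter r X0 d"
  have Q: "Q (?I c)" for c by (rule trans_iter_invariant[OF wo Q0 Qd QI])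
  show ?case
  proof (cases rule: trans_iter_cases[OF wo, of a X0 d, case_names least succ limit])
    case least
    then show ?thesis using less.prems by blast
  next
    case (succ p)
    show ?thesis
    proof (cases "b = p")
      case False
      then have "(b, p) \<in> r - Id" using succ less.prems by blast
      then have "?I p \<subseteq> d (?I b)" using less.IH succ(1) by blast
      then show ?thesis using succ(3) deflationary[OF Q] by blast
    qed (use succ in simp)
  next
    case limit
    then obtain c where c: "(c, a) \<in> r - Id" "(c, b) \<notin> r" using less.prems by blast
    then have "(b, c) \<in> r - Id" using Well_order_not_le_imp_less[OF wo c(1) less.prems] by blast
    then have "?I c \<subseteq> d (?I b)" using less.IH c(1) by blast
    moreover have "?I a \<subseteq> ?I c" using limit(3) c(1) by blast
    ultimately show ?thesis by blast
  qed
qed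

lemma trans_iter_antimono:
  assumes wo: "Well_order r" and "Q X0" and "\<And>X. Q X \<Longrightarrow> Q (d X)"
    and "\<And>XX. XX \<noteq> {} \<Longrightarrow> \<forall>X\<in>XX. Q X \<Longrightarrow> Q (\<Inter> XX)"
    and deflationary: "\<And>X. Q X \<Longrightarrow> d X \<subseteq> X"
    and "(b, a) \<in> r"
  shows "trans_iter r X0 d a \<subseteq> trans_iter r X0 d b"
proof (cases "a = b")
  case False
  then have "trans_iter r X0 d a \<subseteq> d (trans_iter r X0 d b)"
    using assms by (intro trans_iter_strict_subset[where Q = Q]) auto
  also have "\<dots> \<subseteq> trans_iter r X0 d b"
    using assms by (intro deflationary trans_iter_invariant[where Q = Q])
  finally show ?thesis .
qed simp

lemma trans_iter_full_subset:
  assumes wo: "Well_order r" and Q0: "Q X0" and Qd: "\<And>X. Q X \<Longrightarrow> Q (d X)"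
    and QI: "\<And>XX. XX \<noteq> {} \<Longrightarrow> \<forall>X\<in>XX. Q X \<Longrightarrow> Q (\<Inter> XX)"
    and deflationary: "\<And>X. Q X \<Longrightarrow> d X \<subseteq> X"
    and a: "a \<in> Field r"
  shows "trans_iter_full r X0 d \<subseteq> d (trans_iter r X0 d a)"
proof -
  let ?I = "trans_iter r X0 d"
  have below: "?I c \<subseteq> d (?I a)" if "(a, c) \<in> r - Id" for c
    using trans_iter_strict_subset[where Q = Q, OF assms(1-5) that] .
  show ?thesis
  proof (cases "\<exists>m\<in>Field r. \<forall>c\<in>Field r. (c, m) \<in> r")
    case True
    then obtain m where m: "m \<in> Field r" "\<forall>c\<in>Field r. (c, m) \<in> r" by blast
    have "(THE m. m \<in> Field r \<and> (\<forall>c\<in>Field r. (c, m) \<in> r)) = m"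
      using m Well_order_antisym[OF wo] by (intro the_equality) blast+
    then have full: "trans_iter_full r X0 d = d (?I m)"
      unfolding trans_iter_full_def using m by auto
    show ?thesis
    proof (cases "a = m")
      case False
      then have "?I m \<subseteq> d (?I a)" using below m a by blast
      moreover have "d (?I m) \<subseteq> ?I m"
        by (rule deflationary, rule trans_iter_invariant[where Q = Q, OF wo Q0 Qd QI])
      ultimately show ?thesis unfolding full by blast
    qed (simp add: full)
  next
    case False
    then obtain c where c: "c \<in> Field r" "(c, a) \<notin> r" using a by blast
    then have "(a, c) \<in> r - Id" using Well_order_total[OF wo a] Well_order_refl[OF wo a] by blast
    moreover have "trans_iter_full r X0 d \<subseteq> ?I c"
      unfolding trans_iter_full_def using False a c(1) by auto
    ultimately show ?thesis using below by blast
  qed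
qed

section \<open>The Cantor space and Cantor--Bendixson derivatives\<close>

lemma inj_char_set: "inj char_set"
  unfolding inj_def char_set_def by (metis Collect_mem_eq)

lemma Hausdorff_space_cantor: "Hausdorff_space (euclidean :: (nat \<Rightarrow> bool) topology)"
proof -
  have "Hausdorff_space (euclidean :: bool topology)"
    unfolding Hausdorff_space_def
  proof (intro allI impI)
    fix x y :: bool
    show "\<exists>U V. openin euclidean U \<and> openin euclidean V \<and> x \<in> U \<and> y \<in> V \<and> disjnt U V"
      if "x \<in> topspace euclidean \<and> y \<in> topspace euclidean \<and> x \<noteq> y"
      using that by (intro exI[of _ "{x}"] exI[of _ "{y}"]) (auto simp: open_discrete disjnt_def)
  qed
  then have "Hausdorff_space (product_topology (\<lambda>_::nat. euclidean :: bool topology) UNIV)"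
    by (simp add: Hausdorff_space_product_topology)
  then show ?thesis by (simp only: euclidean_product_topology)
qed

lemma compact_imp_closed_cantor: "compact (S :: (nat \<Rightarrow> bool) set) \<Longrightarrow> closed S"
  using Hausdorff_space_cantor compactin_imp_closedin closed_closedin by fastforce

lemma islimpt_char_set_imp_agreeing:
  assumes "char_set F islimpt char_set ` K"
  shows "\<exists>G\<in>K. G \<noteq> F \<and> (\<forall>j\<le>m. j \<in> G \<longleftrightarrow> j \<in> F)"
proof -
  let ?U = "{g :: nat \<Rightarrow> bool. \<forall>j\<in>{..m}. g (id j) \<in> {char_set F j}}"
  have "open ?U" by (rule product_topology_basis') (auto simp: open_discrete)
  moreover have "char_set F \<in> ?U" by simp
  ultimately obtain y where "y \<in> char_set ` K" "y \<in> ?U" "y \<noteq> char_set F"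
    using assms by (meson islimptE)
  then obtain G where "G \<in> K" "char_set G \<in> ?U" "char_set G \<noteq> char_set F" by blast
  then show ?thesis by (auto simp: char_set_def)
qed

lemma closed_char_set_cb_deriv: "closed (char_set ` cb_deriv K)"
  unfolding closed_limpt
proof (intro allI impI)
  fix g assume g: "g islimpt char_set ` cb_deriv K"
  have "g islimpt char_set ` K"
  proof (rule islimptI)
    fix U assume "g \<in> U" "open U"
    then obtain y where y: "y \<in> char_set ` cb_deriv K" "y \<in> U" "y \<noteq> g"
      using g by (meson islimptE)
    then obtain j where j: "y j \<noteq> g j" by blast
    have "open {h :: nat \<Rightarrow> bool. \<forall>i\<in>{j}. h (id i) \<in> {y j}}"
      by (rule product_topology_basis') (auto simp: open_discrete)
    then have "open (U \<inter> {h. h j = y j})" using \<open>open U\<close> by auto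
    moreover have "y islimpt char_set ` K" using y(1) by (auto simp: cb_deriv_def)
    moreover have "y \<in> U \<inter> {h. h j = y j}" using y(2) by simp
    ultimately obtain z where "z \<in> char_set ` K" "z \<in> U \<inter> {h. h j = y j}" "z \<noteq> y"
      by (meson islimptE)
    then show "\<exists>z\<in>char_set ` K. z \<in> U \<and> z \<noteq> g" using j by auto
  qed
  moreover have "g = char_set {n. g n}" by (simp add: char_set_def)
  ultimately show "g \<in> char_set ` cb_deriv K" unfolding cb_deriv_def by auto
qed

lemma cb_deriv_subset:
  assumes "closed (char_set ` K)" shows "cb_deriv K \<subseteq> K"
  using assms inj_char_set unfolding cb_deriv_def closed_limpt by (auto dest: injD)

lemma closed_char_set_Inter:
  assumes "KK \<noteq> {}" "\<forall>K\<in>KK. closed (char_set ` K)"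
  shows "closed (char_set ` \<Inter> KK)"
proof -
  obtain K0 where "K0 \<in> KK" using assms(1) by blast
  then have "char_set ` \<Inter> KK = (\<Inter>K\<in>KK. char_set ` K)"
    using image_INT[OF inj_char_set, of KK id K0] by simp
  then show ?thesis using assms(2) by (auto intro: closed_INT)
qed

lemma cb_deriv_eq_empty:
  assumes "K \<subseteq> {{}}" shows "cb_deriv K = {}"
proof (rule ccontr)
  assume "cb_deriv K \<noteq> {}"
  then obtain F where lp: "char_set F islimpt char_set ` K" by (auto simp: cb_deriv_def)
  obtain G where "G \<in> K" "G \<noteq> F" using islimpt_char_set_imp_agreeing[OF lp] by blast
  then obtain j where "j \<in> F" using assms by blast
  moreover obtain G' where "G' \<in> K" "\<forall>i\<le>j. i \<in> G' \<longleftrightarrow> i \<in> F"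
    using islimpt_char_set_imp_agreeing[OF lp] by blast
  ultimately show False using assms by auto
qed

lemma cb_deriv_extension:
  assumes F: "F \<in> cb_deriv K" and fin: "\<forall>G\<in>K. finite G" "finite F"
  obtains G n where "G \<in> K" "\<forall>m\<in>F. m < n" "{g\<in>G. g \<le> n} = insert n F"
proof -
  define M where "M = Max (insert 0 F)"
  have FM: "\<forall>m\<in>F. m \<le> M" unfolding M_def using fin(2) by simp
  obtain G where G: "G \<in> K" "G \<noteq> F" "\<forall>j\<le>M. j \<in> G \<longleftrightarrow> j \<in> F"
    using F islimpt_char_set_imp_agreeing unfolding cb_deriv_def by blast
  have lower: "{g\<in>G. g \<le> M} = F" using G(3) FM by auto
  then have above: "{g\<in>G. M < g} \<noteq> {}" using G(2) by auto
  define n where "n = Min {g\<in>G. M < g}"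
  have "finite G" using G(1) fin(1) by blast
  then have n: "n \<in> G" "M < n" "\<forall>g\<in>G. M < g \<longrightarrow> n \<le> g"
    using Min_in[OF _ above] unfolding n_def by auto
  have "{g\<in>G. g \<le> n} = insert n F"
  proof (intro equalityI subsetI)
    fix g assume "g \<in> {g\<in>G. g \<le> n}"
    then show "g \<in> insert n F"
      using lower n(3) by (metis (mono_tags) insertCI le_antisym mem_Collect_eq not_le)
  next
    fix g assume "g \<in> insert n F"
    then show "g \<in> {g\<in>G. g \<le> n}" using lower n(1,2) FM by fastforce
  qed
  moreover have "\<forall>m\<in>F. m < n" using FM n(2) by fastforce
  ultimately show thesis using that G(1) by blast
qed

lemma closed_family_no_infinite_chain:
  assumes closed: "closed (char_set ` H)" and fin: "\<forall>F\<in>H. finite F"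
    and mono: "strict_mono (g :: nat \<Rightarrow> nat)"
  shows "\<exists>n. g ` {..n} \<notin> H"
proof (rule ccontr)
  assume "\<not> ?thesis"
  then have chain: "\<forall>n. g ` {..n} \<in> H" by blast
  have "limitin euclidean (\<lambda>n. char_set (g ` {..n}) j) (char_set (range g) j) sequentially" for j
  proof (rule limitin_eventually)
    show "\<forall>\<^sub>F n in sequentially. char_set (g ` {..n}) j = char_set (range g) j"
    proof (rule eventually_sequentiallyI)
      fix n assume "j \<le> n"
      have "j \<in> g ` {..n}" if j: "j \<in> range g"
      proof -
        obtain k where "j = g k" using j by blast
        moreover have "k \<le> n"
          using strict_mono_imp_increasing[OF mono, of k] \<open>j \<le> n\<close> calculation by simp
        ultimately show ?thesis by blast
      qed
      then show "char_set (g ` {..n}) j = char_set (range g) j" by (auto simp: char_set_def)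
    qed
  qed simp
  then have "limitin (product_topology (\<lambda>_. euclidean) UNIV)
      (\<lambda>n. char_set (g ` {..n})) (char_set (range g)) sequentially"
    by (simp add: limitin_componentwise)
  then have lim: "(\<lambda>n. char_set (g ` {..n})) \<longlonglongrightarrow> char_set (range g)"
    by (simp add: euclidean_product_topology)
  have "char_set (range g) \<in> char_set ` H"
    by (rule closed_sequentially[OF closed _ lim]) (use chain in auto)
  then have "finite (range g)" using fin inj_char_set by (auto dest: injD)
  moreover have "inj g" using strict_mono_imp_inj_on[OF mono] .
  ultimately show False using finite_imageD by fastforce
qed

lemma closed_subfamily_cb_deriv:
  "K \<subseteq> H \<and> closed (char_set ` K) \<Longrightarrow> cb_deriv K \<subseteq> H \<and> closed (char_set ` cb_deriv K)"
  using cb_deriv_subset closed_char_set_cb_deriv by blast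

lemma closed_subfamily_Inter:
  assumes "KK \<noteq> {}" "\<forall>K\<in>KK. K \<subseteq> H \<and> closed (char_set ` K)"
  shows "\<Inter> KK \<subseteq> H \<and> closed (char_set ` \<Inter> KK)"
  using assms closed_char_set_Inter[OF assms(1)] by blast

lemma closed_subfamily_cb_deriv_subset: "K \<subseteq> H \<and> closed (char_set ` K) \<Longrightarrow> cb_deriv K \<subseteq> K"
  using cb_deriv_subset by blast

lemmas cb_iterate_invariant =
  closed_subfamily_cb_deriv closed_subfamily_Inter closed_subfamily_cb_deriv_subset

lemma cb_iterate_subset_closed:
  assumes wo: "Well_order r" and closed: "closed (char_set ` H)"
  shows "trans_iter r H cb_deriv a \<subseteq> H \<and> closed (char_set ` trans_iter r H cb_deriv a)"
  by (rule trans_iter_invariant[OF wo _ closed_subfamily_cb_deriv closed_subfamily_Inter])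
    (simp add: closed)

lemma cb_iterate_strict_subset:
  assumes wo: "Well_order r" and closed: "closed (char_set ` H)" and ba: "(b, a) \<in> r - Id"
  shows "trans_iter r H cb_deriv a \<subseteq> cb_deriv (trans_iter r H cb_deriv b)"
  using trans_iter_strict_subset[OF wo _ cb_iterate_invariant ba] closed by blast

lemma cb_iterate_antimono:
  assumes wo: "Well_order r" and closed: "closed (char_set ` H)" and ba: "(b, a) \<in> r"
  shows "trans_iter r H cb_deriv a \<subseteq> trans_iter r H cb_deriv b"
  using trans_iter_antimono[OF wo _ cb_iterate_invariant ba] closed by blast

lemma cb_iterate_nonempty_member:
  assumes wo: "Well_order r" and closed: "closed (char_set ` H)"
    and full: "trans_iter_full r H cb_deriv = {{}}" and a: "a \<in> Field r"
  shows "\<exists>F\<in>trans_iter r H cb_deriv a. F \<noteq> {}"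
proof (rule ccontr)
  assume "\<not> ?thesis"
  then have "cb_deriv (trans_iter r H cb_deriv a) = {}" by (intro cb_deriv_eq_empty) blast
  moreover have "trans_iter_full r H cb_deriv \<subseteq> cb_deriv (trans_iter r H cb_deriv a)"
    using trans_iter_full_subset[OF wo _ cb_iterate_invariant a] closed by blast
  ultimately show False using full by simp
qed

section \<open>Finite sequences and trees\<close>

lemma sorted_list_of_set_strict_sorted:
  "sorted_wrt (<) (xs :: 'a::linorder list) \<Longrightarrow> sorted_list_of_set (set xs) = xs"
  by (simp add: sorted_list_of_set_sort_remdups strict_sorted_iff distinct_remdups_id sorted_sort_id)

lemma seq_of_lower_part:
  assumes "finite G"
  shows "seq_of {g\<in>G. g \<le> m} c = take (card {g\<in>G. g \<le> m}) (seq_of G c)"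
proof -
  let ?L = "sorted_list_of_set {g\<in>G. g \<le> m} @ sorted_list_of_set {g\<in>G. m < g}"
  have "sorted_wrt (<) ?L"
    unfolding sorted_wrt_append using assms by (auto simp: strict_sorted_list_of_set)
  moreover have "set ?L = G" using assms by auto
  ultimately have "sorted_list_of_set G = ?L" using sorted_list_of_set_strict_sorted by metis
  then show ?thesis unfolding seq_of_def by (simp add: take_map)
qed

lemma seq_of_insert_greater:
  assumes "finite F" "\<forall>m\<in>F. m < n"
  shows "seq_of (insert n F) c = seq_of F c @ [c n]"
proof -
  have "sorted_wrt (<) (sorted_list_of_set F @ [n])"
    unfolding sorted_wrt_append using assms by (auto simp: strict_sorted_list_of_set)
  moreover have "set (sorted_list_of_set F @ [n]) = insert n F" using assms by auto
  ultimately have "sorted_list_of_set (insert n F) = sorted_list_of_set F @ [n]"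
    using sorted_list_of_set_strict_sorted by metis
  then show ?thesis unfolding seq_of_def by simp
qed

lemma take_seq_of:
  assumes "finite F"
  shows "take k (seq_of F c) = seq_of (set (take k (sorted_list_of_set F))) c"
proof -
  have "sorted_list_of_set (set (take k (sorted_list_of_set F))) = take k (sorted_list_of_set F)"
    by (rule sorted_list_of_set_strict_sorted) (simp add: sorted_wrt_take)
  then show ?thesis unfolding seq_of_def by (simp add: take_map)
qed

lemma length_seq_of [simp]: "length (seq_of F c) = card F"
  unfolding seq_of_def by simp

lemma finite_seqs_of:
  assumes "finite F" "\<forall>n\<in>F. finite (A n)"
  shows "finite {seq_of F c | c. \<forall>n\<in>F. c n \<in> A n}"
proof (rule finite_subset)
  show "{seq_of F c | c. \<forall>n\<in>F. c n \<in> A n} \<subseteq> {xs. set xs \<subseteq> \<Union> (A ` F) \<and> length xs = card F}"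
    unfolding seq_of_def using assms(1) by fastforce
  show "finite {xs. set xs \<subseteq> \<Union> (A ` F) \<and> length xs = card F}"
    using assms by (intro finite_lists_length_eq) blast
qed

definition prefix_closed :: "'y list set \<Rightarrow> bool" where
  "prefix_closed Z \<longleftrightarrow> (\<forall>s\<in>Z. \<forall>k. 1 \<le> k \<and> k \<le> length s \<longrightarrow> take k s \<in> Z)"

lemma prefix_closedD: "prefix_closed Z \<Longrightarrow> s \<in> Z \<Longrightarrow> 1 \<le> k \<Longrightarrow> k \<le> length s \<Longrightarrow> take k s \<in> Z"
  unfolding prefix_closed_def by blast

lemma tree_on_iff_prefix_closed:
  "tree_on S T \<longleftrightarrow> (\<forall>s\<in>T. s \<noteq> [] \<and> set s \<subseteq> S) \<and> prefix_closed T"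
  unfolding tree_on_def prefix_closed_def by blast

lemma tree_D_subset: "tree_D Z \<subseteq> Z"
  unfolding tree_D_def by blast

lemma prefix_closed_tree_D:
  assumes Z: "prefix_closed Z" shows "prefix_closed (tree_D Z)"
  unfolding prefix_closed_def
proof (intro ballI allI impI)
  fix s k assume s: "s \<in> tree_D Z" and k: "1 \<le> k \<and> k \<le> length s"
  then have "s \<in> Z" unfolding tree_D_def by blast
  show "take k s \<in> tree_D Z"
  proof (cases "k < length s")
    case True
    have "take k s @ [s ! k] = take (Suc k) s" using True by (simp add: take_Suc_conv_app_nth)
    moreover have "take (Suc k) s \<in> Z" "take k s \<in> Z"
      using prefix_closedD[OF Z \<open>s \<in> Z\<close>] True k by auto
    ultimately have "take k s \<in> Z" "take k s @ [s ! k] \<in> Z" by simp_all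
    then show ?thesis unfolding tree_D_def by blast
  next
    case False
    then show ?thesis using k s by simp
  qed
qed

lemma prefix_closed_Inter: "\<forall>Z\<in>ZZ. prefix_closed Z \<Longrightarrow> prefix_closed (\<Inter> ZZ)"
  unfolding prefix_closed_def by blast

lemma prefix_closed_tree_iterate:
  "Well_order r \<Longrightarrow> prefix_closed T \<Longrightarrow> prefix_closed (trans_iter r T tree_D a)"
  by (rule trans_iter_invariant) (auto intro: prefix_closed_tree_D prefix_closed_Inter)

lemma tree_iterate_antimono:
  "Well_order r \<Longrightarrow> (b, a) \<in> r \<Longrightarrow> trans_iter r T tree_D a \<subseteq> trans_iter r T tree_D b"
  by (rule trans_iter_antimono[where Q = "\<lambda>_. True"]) (auto simp: tree_D_subset)

section \<open>From derived families to derived trees\<close>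

definition seq_realised :: "(nat \<Rightarrow> 'y set) \<Rightarrow> 'y list set \<Rightarrow> nat set \<Rightarrow> bool" where
  "seq_realised A Z F \<longleftrightarrow> (\<exists>c. (\<forall>n\<in>F. c n \<in> A n) \<and> seq_of F c \<in> Z)"

text \<open>Only finitely many sequences live on \<open>F\<close>; each one missing from the intersection is
  missing from some \<open>Z i\<close>, and a common lower bound of these finitely many sets would contain
  none of them.\<close>

lemma seq_realised_INT:
  assumes fin: "finite F" "\<forall>n\<in>F. finite (A n)"
    and directed: "\<And>B. finite B \<Longrightarrow> B \<subseteq> I \<Longrightarrow> \<exists>i\<in>I. \<forall>j\<in>B. Z i \<subseteq> Z j"
    and realised: "\<forall>i\<in>I. seq_realised A (Z i) F"
  shows "seq_realised A (\<Inter>i\<in>I. Z i) F"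
proof (rule ccontr)
  let ?S = "{seq_of F c | c. \<forall>n\<in>F. c n \<in> A n}"
  assume "\<not> ?thesis"
  then have "\<forall>s\<in>?S. \<exists>i. i \<in> I \<and> s \<notin> Z i" unfolding seq_realised_def by blast
  from bchoice[OF this] obtain w where w: "\<forall>s\<in>?S. w s \<in> I \<and> s \<notin> Z (w s)" ..
  have "finite (w ` ?S)" "w ` ?S \<subseteq> I" using finite_seqs_of[OF fin] w by auto
  then obtain i where i: "i \<in> I" "\<forall>j\<in>w ` ?S. Z i \<subseteq> Z j" by (rule directed[THEN bexE])
  obtain c where c: "\<forall>n\<in>F. c n \<in> A n" "seq_of F c \<in> Z i"
    using realised i(1) unfolding seq_realised_def by blast
  then have "seq_of F c \<in> ?S" by blast
  then have "Z i \<subseteq> Z (w (seq_of F c))" "seq_of F c \<notin> Z (w (seq_of F c))" using i(2) w by auto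
  then show False using c(2) by blast
qed

text \<open>The successor step: \<open>F\<close> is an initial segment of some \<open>G \<in> K\<close> with one more element
  \<open>n\<close> above it, and a sequence on \<open>G\<close>, cut at \<open>n\<close>, exhibits a child of its restriction to \<open>F\<close>.\<close>

lemma seq_realised_tree_D:
  assumes F: "F \<in> cb_deriv K" "F \<noteq> {}" "finite F" and fin: "\<forall>G\<in>K. finite G"
    and Z: "prefix_closed Z" and realised: "\<forall>G\<in>K. G \<noteq> {} \<longrightarrow> seq_realised A Z G"
  shows "seq_realised A (tree_D Z) F"
proof -
  obtain G n where G: "G \<in> K" "\<forall>m\<in>F. m < n" "{g\<in>G. g \<le> n} = insert n F"
    using cb_deriv_extension[OF F(1) fin F(3)] .
  then obtain c where c: "\<forall>m\<in>G. c m \<in> A m" "seq_of G c \<in> Z"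
    using realised unfolding seq_realised_def by blast
  have "finite G" using G(1) fin by blast
  have "card (insert n F) \<le> card G"
    using G(3) \<open>finite G\<close> by (metis (no_types, lifting) card_mono mem_Collect_eq subsetI)
  moreover have "seq_of F c @ [c n] = take (card (insert n F)) (seq_of G c)"
    using seq_of_lower_part[OF \<open>finite G\<close>, of n c] seq_of_insert_greater[OF F(3) G(2), of c] G(3)
    by argo
  moreover have "1 \<le> card (insert n F)" using F(3) by (simp add: Suc_le_eq card_gt_0_iff)
  ultimately have snoc: "seq_of F c @ [c n] \<in> Z"
    using prefix_closedD[OF Z c(2)] by (metis length_seq_of)
  have "1 \<le> card F" using F(2,3) by (simp add: Suc_le_eq card_gt_0_iff)
  then have "seq_of F c \<in> Z"
    using prefix_closedD[OF Z snoc, of "card F"] by simp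
  moreover have "F \<subseteq> G" using G(3) by blast
  ultimately show ?thesis
    using snoc c(1) unfolding seq_realised_def tree_D_def by blast
qed

lemma seq_realised_tree_iterate_INT:
  assumes wo: "Well_order r" and below: "\<exists>b. (b, a) \<in> r - Id"
    and fin: "finite F" "\<forall>n\<in>F. finite (A n)"
    and realised: "\<forall>b. (b, a) \<in> r - Id \<longrightarrow> seq_realised A (trans_iter r T tree_D b) F"
  shows "seq_realised A (\<Inter>b\<in>{b. (b, a) \<in> r - Id}. trans_iter r T tree_D b) F"
proof (rule seq_realised_INT[OF fin])
  fix B assume "finite B" "B \<subseteq> {b. (b, a) \<in> r - Id}"
  moreover have "{b. (b, a) \<in> r - Id} \<noteq> {}" "{b. (b, a) \<in> r - Id} \<subseteq> Field r"
    using below by (auto intro: FieldI1)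
  ultimately obtain m where "m \<in> {b. (b, a) \<in> r - Id}" "\<forall>b\<in>B. (b, m) \<in> r"
    using Well_order_finite_upper_bound[OF wo] by meson
  then show "\<exists>m\<in>{b. (b, a) \<in> r - Id}. \<forall>b\<in>B. trans_iter r T tree_D m \<subseteq> trans_iter r T tree_D b"
    using tree_iterate_antimono[OF wo] by blast
qed (use realised in blast)

lemma seq_realised_trans_iter:
  assumes wo: "Well_order r" "Well_order s" and emb: "embed r s f"
    and H: "closed (char_set ` H)" "\<forall>F\<in>H. finite F" and A: "\<forall>n. finite (A n)"
    and T: "prefix_closed T" "\<forall>F\<in>H. F \<noteq> {} \<longrightarrow> seq_realised A T F"
    and a: "a \<in> Field r"
  shows "\<forall>F\<in>trans_iter s H cb_deriv (f a). F \<noteq> {} \<longrightarrow> seq_realised A (trans_iter r T tree_D a) F"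
  using Well_order_wf_Diff_Id[OF wo(1)] a
proof (induction a rule: wf_induct_rule)
  case (less a)
  let ?Ib = "trans_iter r T tree_D" and ?Ii = "trans_iter s H cb_deriv"
  have IH: "seq_realised A (?Ib b) G" if "(b, a) \<in> r - Id" "G \<in> ?Ii (f b)" "G \<noteq> {}" for b G
    using less.IH[OF that(1)] that by (auto intro: FieldI1)
  show ?case
  proof (intro ballI impI)
    fix F assume F: "F \<in> ?Ii (f a)" "F \<noteq> {}"
    have "F \<in> H" using F(1) cb_iterate_subset_closed[OF wo(2) H(1)] by blast
    then have "finite F" using H(2) by blast
    show "seq_realised A (?Ib a) F"
    proof (cases rule: trans_iter_cases[OF wo(1), of a T tree_D, case_names least succ limit])
      case least
      then show ?thesis using \<open>F \<in> H\<close> F(2) T(2) by simp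
    next
      case (succ p)
      have "F \<in> cb_deriv (?Ii (f p))"
        using F(1) cb_iterate_strict_subset[OF wo(2) H(1) embed_strict[OF wo(1) emb succ(1)]] by blast
      moreover have "\<forall>G\<in>?Ii (f p). finite G"
        using cb_iterate_subset_closed[OF wo(2) H(1)] H(2) by blast
      ultimately have "seq_realised A (tree_D (?Ib p)) F"
        using seq_realised_tree_D F(2) \<open>finite F\<close> prefix_closed_tree_iterate[OF wo(1) T(1)]
          IH[OF succ(1)] by blast
      then show ?thesis using succ(3) by simp
    next
      case limit
      have "F \<in> ?Ii (f b)" if "(b, a) \<in> r - Id" for b
        using F(1) cb_iterate_antimono[OF wo(2) H(1)] embed_strict[OF wo(1) emb that] by blast
      then have "\<forall>b. (b, a) \<in> r - Id \<longrightarrow> seq_realised A (?Ib b) F" using IH F(2) by blast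
      moreover have "\<forall>n\<in>F. finite (A n)" using A by blast
      ultimately have "seq_realised A (\<Inter>b\<in>{b. (b, a) \<in> r - Id}. ?Ib b) F"
        using seq_realised_tree_iterate_INT[OF wo(1) limit(1) \<open>finite F\<close>] by blast
      moreover have "?Ib a = (\<Inter>b\<in>{b. (b, a) \<in> r - Id}. ?Ib b)" using limit(3) by auto
      ultimately show ?thesis by simp
    qed
  qed
qed

definition supported_seqs :: "(nat \<Rightarrow> 'y set) \<Rightarrow> nat set set \<Rightarrow> 'y list set \<Rightarrow> 'y list set" where
  "supported_seqs A H X =
     {s \<in> X. \<exists>F\<in>H. F \<noteq> {} \<and> (\<exists>c. (\<forall>n\<in>F. c n \<in> A n) \<and> s = seq_of F c)}"

lemma supported_seqs_subset: "supported_seqs A H X \<subseteq> X"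
  unfolding supported_seqs_def by blast

lemma seq_realised_supported_seqs:
  assumes "F \<in> H" "F \<noteq> {}" "seq_realised A X F"
  shows "seq_realised A (supported_seqs A H X) F"
proof -
  obtain c where "\<forall>n\<in>F. c n \<in> A n" "seq_of F c \<in> X"
    using assms(3) unfolding seq_realised_def by blast
  then have "seq_of F c \<in> supported_seqs A H X"
    using assms(1,2) unfolding supported_seqs_def by blast
  then show ?thesis using \<open>\<forall>n\<in>F. c n \<in> A n\<close> unfolding seq_realised_def by blast
qed

lemma prefix_closed_supported_seqs:
  assumes H: "hereditary_fam H" "\<forall>F\<in>H. finite F"
    and X_her: "\<forall>F x G. finite F \<and> F \<noteq> {} \<and> (\<forall>n\<in>F. x n \<in> A n) \<and> seq_of F x \<in> X
                   \<and> G \<noteq> {} \<and> G \<subseteq> F \<longrightarrow> seq_of G x \<in> X"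
  shows "prefix_closed (supported_seqs A H X)"
  unfolding prefix_closed_def
proof (intro ballI allI impI)
  fix s k assume s: "s \<in> supported_seqs A H X" and k: "1 \<le> k \<and> k \<le> length s"
  then obtain F c where F: "s \<in> X" "F \<in> H" "F \<noteq> {}" "\<forall>n\<in>F. c n \<in> A n" "s = seq_of F c"
    unfolding supported_seqs_def by blast
  have "finite F" using F(2) H(2) by blast
  define G where "G = set (take k (sorted_list_of_set F))"
  have "take k s = seq_of G c" unfolding G_def F(5) by (rule take_seq_of[OF \<open>finite F\<close>])
  moreover have "G \<subseteq> F" unfolding G_def using \<open>finite F\<close> by (metis set_take_subset sorted_list_of_set(1))
  moreover have "G \<noteq> {}" unfolding G_def using k F(5) \<open>finite F\<close> by (auto simp: sorted_list_of_set_eq_Nil_iff)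
  moreover have "G \<in> H" using H(1) F(2) \<open>G \<subseteq> F\<close> unfolding hereditary_fam_def by blast
  moreover have "seq_of G c \<in> X"
    using X_her[rule_format, of F c G] \<open>finite F\<close> F(1,3-5) \<open>G \<subseteq> F\<close> \<open>G \<noteq> {}\<close> by blast
  moreover have "\<forall>n\<in>G. c n \<in> A n" using F(4) \<open>G \<subseteq> F\<close> by blast
  ultimately show "take k s \<in> supported_seqs A H X"
    unfolding supported_seqs_def by (simp (no_asm_simp)) blast
qed

lemma tree_on_supported_seqs:
  assumes "\<forall>n. A n \<subseteq> Y" "\<forall>F\<in>H. finite F" "prefix_closed (supported_seqs A H X)"
  shows "tree_on Y (supported_seqs A H X)"
proof -
  have "s \<noteq> [] \<and> set s \<subseteq> Y" if s: "s \<in> supported_seqs A H X" for s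
  proof -
    obtain F c where F: "F \<in> H" "F \<noteq> {}" "\<forall>n\<in>F. c n \<in> A n" "s = seq_of F c"
      using s unfolding supported_seqs_def by blast
    have "finite F" using F(1) assms(2) by blast
    then have "length s \<noteq> 0" using F(2,4) by simp
    moreover have "set s \<subseteq> Y" using F(3,4) \<open>finite F\<close> assms(1) unfolding seq_of_def by auto
    ultimately show ?thesis by auto
  qed
  then show ?thesis unfolding tree_on_iff_prefix_closed using assms(3) by blast
qed

lemma wf_tree_supported_seqs:
  assumes A_disj: "\<forall>m n. m \<noteq> n \<longrightarrow> A m \<inter> A n = {}"
    and H: "closed (char_set ` H)" "\<forall>F\<in>H. finite F"
  shows "wf_tree (supported_seqs A H X)"
  unfolding wf_tree_def
proof
  assume "\<exists>y :: nat \<Rightarrow> 'a. \<forall>n. map y [0..<Suc n] \<in> supported_seqs A H X"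
  then obtain y :: "nat \<Rightarrow> 'a" where y: "\<forall>n. map y [0..<Suc n] \<in> supported_seqs A H X" by blast
  \<comment> \<open>by disjointness, each point of a branch determines the index of its \<open>A n\<close>\<close>
  define idx where "idx z = (THE n. z \<in> A n)" for z
  have idx: "idx z = n" if "z \<in> A n" for z n
    unfolding idx_def using that A_disj by (intro the_equality) blast+
  define h where "h = idx \<circ> y"
  have branch: "sorted_wrt (<) (map h [0..<Suc n]) \<and> h ` {..n} \<in> H" for n
  proof -
    obtain F c where F: "F \<in> H" "\<forall>n\<in>F. c n \<in> A n" "map y [0..<Suc n] = seq_of F c"
      using y unfolding supported_seqs_def by blast
    have "finite F" using F(1) H(2) by blast
    have "map h [0..<Suc n] = map idx (seq_of F c)" unfolding h_def F(3)[symmetric] by simp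
    also have "\<dots> = sorted_list_of_set F"
      unfolding seq_of_def map_map by (rule map_idI) (use F(2) \<open>finite F\<close> idx in auto)
    finally have hF: "map h [0..<Suc n] = sorted_list_of_set F" .
    have "h ` {..n} = set (map h [0..<Suc n])"
      by (simp only: set_map set_upt atLeast0LessThan lessThan_Suc_atMost)
    also have "\<dots> = F" unfolding hF using \<open>finite F\<close> by simp
    finally have "h ` {..n} = F" .
    then show ?thesis using hF F(1) by (simp add: strict_sorted_list_of_set)
  qed
  have "strict_mono h" unfolding strict_mono_Suc_iff
  proof
    fix k
    have "sorted_wrt (<) (map h [0..<Suc (Suc k)])" using branch by blast
    then show "h k < h (Suc k)" by (simp add: sorted_wrt_append)
  qed
  then show False using closed_family_no_infinite_chain[OF H] branch by blast
qed

theorem proposition21: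
  fixes Y :: "'y set" and A :: "nat \<Rightarrow> 'y set" and X :: "'y list set"
    and H :: "nat set set" and \<beta> :: "'b rel"
  assumes A_fin: "\<forall>n. finite (A n) \<and> A n \<subseteq> Y"
    and A_disj: "\<forall>m n. m \<noteq> n \<longrightarrow> A m \<inter> A n = {}"
    and X_sub: "\<forall>s\<in>X. \<exists>F x. finite F \<and> F \<noteq> {} \<and> (\<forall>n\<in>F. x n \<in> A n) \<and> s = seq_of F x"
    and X_her: "\<forall>F x G. finite F \<and> F \<noteq> {} \<and> (\<forall>n\<in>F. x n \<in> A n) \<and> seq_of F x \<in> X
                   \<and> G \<noteq> {} \<and> G \<subseteq> F \<longrightarrow> seq_of G x \<in> X"
    and H_reg: "regular_fam H"
    and \<beta>_wo: "Well_order \<beta>"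
    and \<beta>_ge1: "Field \<beta> \<noteq> {}"
    and \<iota>: "iota_ge_countable H \<beta>"
    and H_X: "\<forall>F\<in>H. F \<noteq> {} \<longrightarrow> (\<exists>x. (\<forall>n\<in>F. x n \<in> A n) \<and> seq_of F x \<in> X)"
  shows "\<exists>T. tree_on Y T \<and> T \<subseteq> X \<and> wf_tree T \<and> tree_order_ge T \<beta>"
proof -
  have H_fin: "\<forall>F\<in>H. finite F" and H_her: "hereditary_fam H" and H_closed: "closed (char_set ` H)"
    using H_reg compact_imp_closed_cantor unfolding regular_fam_def by auto
  obtain i :: "nat rel" where i_wo: "Well_order i" and i_full: "trans_iter_full i H cb_deriv = {{}}"
    and "(\<beta>, i) \<in> ordLeq"
    using \<iota> unfolding iota_ge_countable_def by blast
  then obtain f where emb: "embed \<beta> i f" unfolding ordLeq_def by auto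
  define T where "T = supported_seqs A H X"
  have T_prefix: "prefix_closed T"
    unfolding T_def using prefix_closed_supported_seqs[OF H_her H_fin X_her] .
  have "seq_realised A X F" if "F \<in> H" "F \<noteq> {}" for F
    using H_X that unfolding seq_realised_def by blast
  then have T_realised: "\<forall>F\<in>H. F \<noteq> {} \<longrightarrow> seq_realised A T F"
    unfolding T_def using seq_realised_supported_seqs by blast
  have "tree_order_ge T \<beta>" unfolding tree_order_ge_def
  proof
    fix a assume a: "a \<in> Field \<beta>"
    obtain F where "F \<in> trans_iter i H cb_deriv (f a)" "F \<noteq> {}"
      using cb_iterate_nonempty_member[OF i_wo H_closed i_full embed_in_Field[OF emb a]] by blast
    then have "seq_realised A (trans_iter \<beta> T tree_D a) F"
      using seq_realised_trans_iter[OF \<beta>_wo i_wo emb H_closed H_fin _ T_prefix T_realised a] A_fin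
      by blast
    then show "trans_iter \<beta> T tree_D a \<noteq> {}" unfolding seq_realised_def by blast
  qed
  moreover have "tree_on Y T"
    using tree_on_supported_seqs[of A Y H X] A_fin H_fin T_prefix unfolding T_def by blast
  moreover have "wf_tree T" unfolding T_def by (rule wf_tree_supported_seqs[OF A_disj H_closed H_fin])
  ultimately show ?thesis using supported_seqs_subset unfolding T_def by blast
qed

end
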